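(* In the construction described in the context, at the end of the construction $k(A)\le\log t$ for every $A\in V_{cc}$; consequently every edge $e\in E$ crosses at most $2\log t$ of the complete cuts $C_G(X_1),\dots,C_G(X_{t-1})$, and in particular belongs to at most $2\log t$ of the sets $C_1,\dots,C_{t-1}$.
   Context: $\log$ denotes $\log_2$. Setting: $G=(V,E)$ is a connected finite undirected graph (parallel edges allowed), $w:E\to\mathbb{R}_{\ge0}$ edge weights, $c:E\to\mathbb{R}_{>0}$ edge costs, $n=|V|$. For $S\subseteq V$, $C_G(S)=\{e\in E:|e\cap S|=1\}$ (complete cut; its edges cross it) and $C_G(S,W)=\{e\in C_G(S):w(e)<W\}$ (partial cut). $F\subseteq E$ is a set with $G'=G\setminus F=(V,E\setminus F)$ connected; $B=c(F)$ and $\Delta=\mathrm{MST}(G')-\mathrm{MST}(G)$ (MST weights w.r.t. $w$). Construction: let $T$ be a minimum spanning tree of $G$ and $T\cap F=\{e_1,\dots,e_{t-1}\}$, with $t\ge2$. Removing these edges splits $T$ into components with vertex sets $A_1,\dots,A_t$ (a partition of $V$). Let $G'_{cc}$ be the multigraph with vertex set $V_{cc}=\{A_1,\dots,A_t\}$ having, for every edge $\{u,v\}\in E\setminus F$ with $u\in A_i$, $v\in A_j$, an edge between $A_i$ and $A_j$ of weight $w(\{u,v\})$ (identified with the original edge). Let $T'_{cc}$ be a minimum spanning tree of $G'_{cc}$, with edges $e'_1,\dots,e'_{t-1}$ indexed so that $w(e'_1)\le\dots\le w(e'_{t-1})$ (ties broken arbitrarily). For each $i$, deleting $e'_i,e'_{i+1},\dots,e'_{t-1}$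 from $T'_{cc}$ leaves a forest in which $e'_i$ joins two components $L_i,R_i\subseteq V_{cc}$. Counters $k(A)=0$ for all $A\in V_{cc}$ initially, and $k(S)=\max_{A\in S}k(A)$. For $i=1,\dots,t-1$ in order: set $X_i=L_i$ if $k(L_i)\le k(R_i)$, else $X_i=R_i$; then increase $k(A)$ by $1$ for every $A\in X_i$. Identifying a set of vertices of $G'_{cc}$ with the union of the corresponding vertex sets in $V$, define $C_i=C_G(X_i,w(e'_i))$. *)

theory Defs
  imports Main Complex_Main
begin

text \<open>Multigraphs: edges are identifiers of type 'e, each with an endpoint set
  given by a function en :: 'e => 'v set (card 2 for a proper edge, card 1 for a loop).\<close>

definition erel :: "('e \<Rightarrow> 'v set) \<Rightarrow> 'e set \<Rightarrow> ('v \<times> 'v) set" where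
  "erel en S = {(u, v). \<exists>e\<in>S. en e = {u, v}}"

definition connected_via :: "'v set \<Rightarrow> ('e \<Rightarrow> 'v set) \<Rightarrow> 'e set \<Rightarrow> bool" where
  "connected_via Vs en S = (\<forall>u\<in>Vs. \<forall>v\<in>Vs. (u, v) \<in> (erel en S)\<^sup>*)"

text \<open>A forest: no edge lies on a cycle (every edge is a bridge; loops are excluded).\<close>
definition is_forest :: "('e \<Rightarrow> 'v set) \<Rightarrow> 'e set \<Rightarrow> bool" where
  "is_forest en S = (\<forall>e\<in>S. \<forall>u v. en e = {u, v} \<longrightarrow> (u, v) \<notin> (erel en (S - {e}))\<^sup>*)"

definition spanning_tree :: "'v set \<Rightarrow> ('e \<Rightarrow> 'v set) \<Rightarrow> 'e set \<Rightarrow> 'e set \<Rightarrow> bool" where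
  "spanning_tree Vs en Es S = (S \<subseteq> Es \<and> connected_via Vs en S \<and> is_forest en S)"

definition is_mst :: "'v set \<Rightarrow> ('e \<Rightarrow> 'v set) \<Rightarrow> ('e \<Rightarrow> real) \<Rightarrow> 'e set \<Rightarrow> 'e set \<Rightarrow> bool" where
  "is_mst Vs en w Es S = (spanning_tree Vs en Es S \<and>
      (\<forall>S'. spanning_tree Vs en Es S' \<longrightarrow> sum w S \<le> sum w S'))"

definition conn_comp :: "('e \<Rightarrow> 'v set) \<Rightarrow> 'e set \<Rightarrow> 'v set \<Rightarrow> 'v \<Rightarrow> 'v set" where
  "conn_comp en S Vs v = {u \<in> Vs. (v, u) \<in> (erel en S)\<^sup>*}"

definition components :: "'v set \<Rightarrow> ('e \<Rightarrow> 'v set) \<Rightarrow> 'e set \<Rightarrow> 'v set set" where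
  "components Vs en S = conn_comp en S Vs ` Vs"

text \<open>Endpoints of an edge in the contracted multigraph G'_cc, whose vertices are the
  components of (V, T - F).\<close>
definition cc_ends :: "'v set \<Rightarrow> ('e \<Rightarrow> 'v set) \<Rightarrow> 'e set \<Rightarrow> 'e \<Rightarrow> 'v set set" where
  "cc_ends Vs en S e = conn_comp en S Vs ` en e"

definition complete_cut :: "('e \<Rightarrow> 'v set) \<Rightarrow> 'e set \<Rightarrow> 'v set \<Rightarrow> 'e set" where
  "complete_cut en Es S = {e \<in> Es. card (en e \<inter> S) = 1}"

definition partial_cut :: "('e \<Rightarrow> 'v set) \<Rightarrow> ('e \<Rightarrow> real) \<Rightarrow> 'e set \<Rightarrow> 'v set \<Rightarrow> real \<Rightarrow> 'e set" where
  "partial_cut en w Es S W = {e \<in> complete_cut en Es S. w e < W}"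

text \<open>The counter process (0-based: step j processes e'_(j+1) with sides L j, R j).
  ctr L R j is the counter function k after j steps; Xsel L R j is X_(j+1).\<close>
fun ctr :: "(nat \<Rightarrow> 'a set) \<Rightarrow> (nat \<Rightarrow> 'a set) \<Rightarrow> nat \<Rightarrow> 'a \<Rightarrow> nat" where
  "ctr L R 0 = (\<lambda>_. 0)"
| "ctr L R (Suc j) =
     (let k = ctr L R j;
          X = (if Max (k ` L j) \<le> Max (k ` R j) then L j else R j)
      in (\<lambda>A. k A + (if A \<in> X then 1 else 0)))"

definition Xsel :: "(nat \<Rightarrow> 'a set) \<Rightarrow> (nat \<Rightarrow> 'a set) \<Rightarrow> nat \<Rightarrow> 'a set" where
  "Xsel L R j = (let k = ctr L R j in
     if Max (k ` L j) \<le> Max (k ` R j) then L j else R j)"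

end

theory Submission
  imports Defs
begin

text \<open>Let \<open>K\<^sub>j(A)\<close> be the component of \<open>A\<close> in the forest formed by the first \<open>j\<close> edges of
  \<open>T'\<^sub>c\<^sub>c\<close>. The counters satisfy \<open>2^k(A) \<le> |K\<^sub>j(A)|\<close>: in step \<open>j\<close> the side \<open>X\<close> of the
  merge has the smaller maximal counter, so for \<open>A \<in> X\<close> and \<open>B\<close> maximising \<open>k\<close> on the other
  side, \<open>2^(k(A)+1) \<le> 2^k(A) + 2^k(B)\<close> is at most the size of the merged component.
  Components have at most \<open>t\<close> vertices, hence \<open>k(A) \<le> log t\<close>. An edge \<open>{u,v}\<close> crosses
  \<open>C\<^sub>G(X\<^sub>i)\<close> only if the component of \<open>u\<close> or of \<open>v\<close> lies in \<open>X\<^sub>i\<close>, and the number of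
  such \<open>i\<close> is the final counter of that component.\<close>

section \<open>Connected components under edge insertion and deletion\<close>

lemma erel_sym: "(u, v) \<in> erel en S \<Longrightarrow> (v, u) \<in> erel en S"
  by (auto simp: erel_def insert_commute)

lemma rtrancl_erel_sym: "(u, v) \<in> (erel en S)\<^sup>* \<Longrightarrow> (v, u) \<in> (erel en S)\<^sup>*"
  by (induct rule: rtrancl_induct) (auto intro: converse_rtrancl_into_rtrancl erel_sym)

lemma erel_mono: "S \<subseteq> S' \<Longrightarrow> erel en S \<subseteq> erel en S'"
  by (auto simp: erel_def)

lemma erel_insert: "en e = {a, b} \<Longrightarrow> erel en (insert e S) = erel en S \<union> {(a, b), (b, a)}"
  by (auto simp: erel_def doubleton_eq_iff)

lemma rtrancl_Un_sym_pair_iff: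
  assumes sym: "\<And>x y. (x, y) \<in> R\<^sup>* \<Longrightarrow> (y, x) \<in> R\<^sup>*"
  shows "(x, y) \<in> (R \<union> {(a, b), (b, a)})\<^sup>* \<longleftrightarrow>
     (x, y) \<in> R\<^sup>* \<or> ((x, a) \<in> R\<^sup>* \<and> (b, y) \<in> R\<^sup>*) \<or> ((x, b) \<in> R\<^sup>* \<and> (a, y) \<in> R\<^sup>*)"
proof
  assume "(x, y) \<in> (R \<union> {(a, b), (b, a)})\<^sup>*"
  then show "(x, y) \<in> R\<^sup>* \<or> ((x, a) \<in> R\<^sup>* \<and> (b, y) \<in> R\<^sup>*) \<or> ((x, b) \<in> R\<^sup>* \<and> (a, y) \<in> R\<^sup>*)"
  proof (induct rule: rtrancl_induct)
    case (step y z)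
    from step(2) consider "(y, z) \<in> R" | "y = a" "z = b" | "y = b" "z = a" by blast
    then show ?case
      using step(3) sym by cases (meson rtrancl_into_rtrancl rtrancl_trans rtrancl.rtrancl_refl)+
  qed simp
next
  assume "(x, y) \<in> R\<^sup>* \<or> ((x, a) \<in> R\<^sup>* \<and> (b, y) \<in> R\<^sup>*) \<or> ((x, b) \<in> R\<^sup>* \<and> (a, y) \<in> R\<^sup>*)"
  moreover have "R\<^sup>* \<subseteq> (R \<union> {(a, b), (b, a)})\<^sup>*" by (rule rtrancl_mono) blast
  moreover have "(a, b) \<in> (R \<union> {(a, b), (b, a)})\<^sup>*" "(b, a) \<in> (R \<union> {(a, b), (b, a)})\<^sup>*" by auto
  ultimately show "(x, y) \<in> (R \<union> {(a, b), (b, a)})\<^sup>*" by (meson rtrancl_trans subsetD)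
qed

lemma conn_comp_self: "v \<in> W \<Longrightarrow> v \<in> conn_comp en S W v"
  by (simp add: conn_comp_def)

lemma conn_comp_subset: "conn_comp en S W v \<subseteq> W"
  by (auto simp: conn_comp_def)

lemma conn_comp_eq: "u \<in> conn_comp en S W v \<Longrightarrow> conn_comp en S W u = conn_comp en S W v"
  unfolding conn_comp_def by (auto intro: rtrancl_trans rtrancl_erel_sym)

lemma conn_comp_disjoint:
  assumes "b \<in> W" "(a, b) \<notin> (erel en S)\<^sup>*"
  shows "conn_comp en S W a \<inter> conn_comp en S W b = {}"
proof (rule ccontr)
  assume "conn_comp en S W a \<inter> conn_comp en S W b \<noteq> {}"
  then obtain x where "x \<in> conn_comp en S W a" "x \<in> conn_comp en S W b" by blast
  then have "b \<in> conn_comp en S W a"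
    using conn_comp_eq conn_comp_self[OF assms(1)] by metis
  with assms(2) show False by (simp add: conn_comp_def)
qed

lemma conn_comp_insert:
  assumes "en e = {a, b}" "v \<in> W"
  shows "conn_comp en (insert e S) W v =
    (if v \<in> conn_comp en S W a \<union> conn_comp en S W b
     then conn_comp en S W a \<union> conn_comp en S W b else conn_comp en S W v)"
proof -
  have "(x, y) \<in> (erel en (insert e S))\<^sup>* \<longleftrightarrow>
     (x, y) \<in> (erel en S)\<^sup>* \<or> ((x, a) \<in> (erel en S)\<^sup>* \<and> (b, y) \<in> (erel en S)\<^sup>*)
       \<or> ((x, b) \<in> (erel en S)\<^sup>* \<and> (a, y) \<in> (erel en S)\<^sup>*)" for x y
    unfolding erel_insert[of en e a b, OF assms(1)] by (rule rtrancl_Un_sym_pair_iff) (rule rtrancl_erel_sym)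
  then show ?thesis
    using assms(2) unfolding conn_comp_def by (auto intro: rtrancl_trans rtrancl_erel_sym)
qed

lemma conn_comp_in_components: "v \<in> W \<Longrightarrow> conn_comp en S W v \<in> components W en S"
  by (simp add: components_def)

lemma components_insert:
  assumes e: "en e = {a, b}" and a: "a \<in> W" and b: "b \<in> W"
  shows "components W en (insert e S) =
    insert (conn_comp en S W a \<union> conn_comp en S W b)
      (components W en S - {conn_comp en S W a, conn_comp en S W b})"
    (is "_ = insert ?U (_ - {?Ca, ?Cb})")
proof -
  have new: "conn_comp en (insert e S) W v = (if v \<in> ?U then ?U else conn_comp en S W v)"
    if "v \<in> W" for v
    using conn_comp_insert[of en e a b, OF e that] .
  have old: "conn_comp en S W v \<in> {?Ca, ?Cb} \<longleftrightarrow> v \<in> ?U" if "v \<in> W" for v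
    using conn_comp_eq[of v en S W a] conn_comp_eq[of v en S W b] conn_comp_self[OF that] by auto
  show ?thesis
  proof (intro equalityI subsetI)
    fix X assume "X \<in> components W en (insert e S)"
    then obtain v where v: "v \<in> W" "X = conn_comp en (insert e S) W v"
      by (auto simp: components_def)
    show "X \<in> insert ?U (components W en S - {?Ca, ?Cb})"
    proof (cases "v \<in> ?U")
      case True
      then show ?thesis using new[OF v(1)] v(2) by simp
    next
      case False
      then show ?thesis
        using new[OF v(1)] old[OF v(1)] v(2) conn_comp_in_components[OF v(1), of en S] by simp
    qed
  next
    fix X assume X: "X \<in> insert ?U (components W en S - {?Ca, ?Cb})"
    have "?U = conn_comp en (insert e S) W a"
      using new[OF a] conn_comp_self[OF a, of en S] by auto
    moreover have "X \<in> components W en (insert e S)" if "X \<in> components W en S - {?Ca, ?Cb}"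
    proof -
      from that obtain v where v: "v \<in> W" "X = conn_comp en S W v"
        unfolding components_def by blast
      then have "X = conn_comp en (insert e S) W v"
        using new[OF v(1)] old[OF v(1)] that by simp
      then show ?thesis using v(1) by (simp add: conn_comp_in_components)
    qed
    ultimately show "X \<in> components W en (insert e S)"
      using X conn_comp_in_components[OF a, of en "insert e S"] by auto
  qed
qed

lemma card_components_insert:
  assumes W: "finite W" and e: "en e = {a, b}" and a: "a \<in> W" and b: "b \<in> W"
  shows "card (components W en S) =
    card (components W en (insert e S)) + (if (a, b) \<in> (erel en S)\<^sup>* then 0 else 1)"
proof -
  let ?Ca = "conn_comp en S W a" and ?Cb = "conn_comp en S W b"
  have fin: "finite (components W en S)" using W by (simp add: components_def)
  have in_comps: "?Ca \<in> components W en S" "?Cb \<in> components W en S"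
    using a b by (simp_all add: conn_comp_in_components)
  show ?thesis
  proof (cases "(a, b) \<in> (erel en S)\<^sup>*")
    case True
    then have "?Cb = ?Ca" using b by (intro conn_comp_eq) (simp add: conn_comp_def)
    then show ?thesis
      using components_insert[of en e a b, OF e a b] in_comps True by (simp add: insert_absorb)
  next
    case False
    have disj: "?Ca \<inter> ?Cb = {}" by (rule conn_comp_disjoint[OF b False])
    then have "?Ca \<noteq> ?Cb" using conn_comp_self[OF a] by blast
    have "?Ca \<union> ?Cb \<notin> components W en S"
    proof
      assume "?Ca \<union> ?Cb \<in> components W en S"
      then obtain v where "?Ca \<union> ?Cb = conn_comp en S W v"
        unfolding components_def by blast
      moreover have "a \<in> ?Ca \<union> ?Cb" using conn_comp_self[OF a] by blast
      ultimately have "?Ca = ?Ca \<union> ?Cb" using conn_comp_eq[of a en S W v] by simp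
      then show False using disj conn_comp_self[OF b, of en S] by blast
    qed
    moreover have "2 \<le> card (components W en S)"
      using card_mono[OF fin, of "{?Ca, ?Cb}"] in_comps \<open>?Ca \<noteq> ?Cb\<close> by simp
    ultimately show ?thesis
      using components_insert[of en e a b, OF e a b] in_comps fin False \<open>?Ca \<noteq> ?Cb\<close>
      by (simp add: card_Diff_subset)
  qed
qed

lemma card_components_empty:
  assumes "finite W"
  shows "card (components W en {}) = card W"
proof -
  have "conn_comp en {} W v = {v}" if "v \<in> W" for v
    using that by (auto simp: conn_comp_def erel_def)
  then have "components W en {} = (\<lambda>v. {v}) ` W" unfolding components_def by auto
  then show ?thesis using assms by (simp add: card_image)
qed

lemma components_eq_singleton:
  assumes "connected_via W en S" "W \<noteq> {}"
  shows "components W en S = {W}"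
proof -
  have "conn_comp en S W v = W" if "v \<in> W" for v
    using assms(1) that unfolding connected_via_def conn_comp_def by auto
  then show ?thesis unfolding components_def using assms(2) by auto
qed

definition edges_within :: "'v set \<Rightarrow> ('e \<Rightarrow> 'v set) \<Rightarrow> 'e set \<Rightarrow> bool" where
  "edges_within W en S \<longleftrightarrow> (\<forall>e\<in>S. \<exists>a b. en e = {a, b} \<and> a \<in> W \<and> b \<in> W)"

lemma edges_within_mono: "edges_within W en S \<Longrightarrow> S' \<subseteq> S \<Longrightarrow> edges_within W en S'"
  by (auto simp: edges_within_def)

lemma edges_withinI_card_2:
  assumes "\<forall>e\<in>S. en e \<subseteq> W \<and> card (en e) = 2"
  shows "edges_within W en S"
  unfolding edges_within_def
proof
  fix e assume "e \<in> S"
  with assms obtain a b where "en e = {a, b}" "en e \<subseteq> W" by (auto simp: card_2_iff)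
  then show "\<exists>a b. en e = {a, b} \<and> a \<in> W \<and> b \<in> W" by blast
qed

lemma edges_within_cc_ends:
  assumes "edges_within V en S"
  shows "edges_within (components V en T) (cc_ends V en T) S"
  unfolding edges_within_def
proof
  fix e assume "e \<in> S"
  with assms obtain a b where "en e = {a, b}" "a \<in> V" "b \<in> V"
    unfolding edges_within_def by blast
  then have "cc_ends V en T e = {conn_comp en T V a, conn_comp en T V b}"
    by (simp add: cc_ends_def)
  with \<open>a \<in> V\<close> \<open>b \<in> V\<close>
  show "\<exists>A B. cc_ends V en T e = {A, B} \<and> A \<in> components V en T \<and> B \<in> components V en T"
    by (blast intro: conn_comp_in_components)
qed

lemma card_le_card_components_add_card:
  assumes "finite S" "finite W" "edges_within W en S"
  shows "card W \<le> card (components W en S) + card S"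
  using assms
proof (induct S rule: finite_induct)
  case empty then show ?case by (simp add: card_components_empty)
next
  case (insert e S)
  then obtain a b where "en e = {a, b}" "a \<in> W" "b \<in> W" by (auto simp: edges_within_def)
  from card_components_insert[of W en e a b S, OF \<open>finite W\<close> this] insert show ?case
    by (auto simp: edges_within_def split: if_splits)
qed

lemma card_components_Diff_forest:
  assumes "finite D" "D \<subseteq> T" "is_forest en T" "edges_within W en D" "finite W"
  shows "card (components W en (T - D)) = card (components W en T) + card D"
  using assms
proof (induct D rule: finite_induct)
  case (insert d D)
  then obtain a b where ab: "en d = {a, b}" "a \<in> W" "b \<in> W" by (auto simp: edges_within_def)
  have "(a, b) \<notin> (erel en (T - {d}))\<^sup>*"
    using insert(5) ab(1) insert(4) unfolding is_forest_def by auto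
  moreover have "(erel en (T - insert d D))\<^sup>* \<subseteq> (erel en (T - {d}))\<^sup>*"
    by (intro rtrancl_mono erel_mono) auto
  ultimately have "(a, b) \<notin> (erel en (T - insert d D))\<^sup>*" by blast
  then have "card (components W en (T - insert d D)) =
      card (components W en (insert d (T - insert d D))) + 1"
    using card_components_insert[of W en d a b "T - insert d D", OF \<open>finite W\<close> ab] by simp
  moreover have "insert d (T - insert d D) = T - D" using insert by auto
  ultimately have "card (components W en (T - insert d D)) = card (components W en (T - D)) + 1"
    by simp
  then show ?case using insert by (simp add: edges_within_def)
qed simp

lemma card_components_Diff_spanning_tree:
  assumes T: "spanning_tree W en Es T" "finite T" "edges_within W en T" and W: "finite W" "W \<noteq> {}"
  shows "card (components W en (T - D)) = card (T \<inter> D) + 1"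
proof -
  have T': "connected_via W en T" "is_forest en T" using T(1) by (auto simp: spanning_tree_def)
  have "T - D = T - (T \<inter> D)" by blast
  then show ?thesis
    using card_components_Diff_forest[of "T \<inter> D" T en W] T(2,3) T'(2) W(1)
      components_eq_singleton[OF T'(1) W(2)]
    by (simp add: edges_within_mono)
qed

lemma card_le_Suc_length_spanning_tree:
  assumes "spanning_tree W en Es (set es)" "distinct es" "edges_within W en (set es)"
    and W: "finite W" "W \<noteq> {}"
  shows "card W \<le> length es + 1"
proof -
  have "components W en (set es) = {W}"
    using assms(1) W(2) by (simp add: spanning_tree_def components_eq_singleton)
  then show ?thesis
    using card_le_card_components_add_card[OF _ W(1) assms(3)] distinct_card[OF assms(2)] by simp
qed

section \<open>The counter process\<close>

lemma ctr_Suc_Xsel: "ctr L R (Suc j) A = ctr L R j A + (if A \<in> Xsel L R j then 1 else 0)"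
  by (simp add: Xsel_def Let_def)

lemma ctr_eq_card_Xsel: "ctr L R n A = card {j. j < n \<and> A \<in> Xsel L R j}"
proof (induct n)
  case (Suc n)
  have "{j. j < Suc n \<and> A \<in> Xsel L R j} =
      {j. j < n \<and> A \<in> Xsel L R j} \<union> (if A \<in> Xsel L R n then {n} else {})"
    by (auto simp: less_Suc_eq)
  then show ?case using Suc by (simp del: ctr.simps add: ctr_Suc_Xsel)
qed simp

definition merges_components ::
    "('e \<Rightarrow> 'a set) \<Rightarrow> 'a set \<Rightarrow> 'e list \<Rightarrow> (nat \<Rightarrow> 'a set) \<Rightarrow> (nat \<Rightarrow> 'a set) \<Rightarrow> bool" where
  "merges_components en W es L R \<longleftrightarrow> (\<forall>j < length es. \<exists>a b.
     en (es ! j) = {a, b} \<and> a \<in> W \<and> b \<in> W \<and> (a, b) \<notin> (erel en (set (take j es)))\<^sup>* \<and>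
     L j = conn_comp en (set (take j es)) W a \<and> R j = conn_comp en (set (take j es)) W b)"

lemma merges_components_if_forest:
  assumes es: "distinct es" "is_forest en (set es)" and W: "edges_within W en (set es)"
    and LR: "\<forall>j < length es. \<exists>a b. en (es ! j) = {a, b} \<and>
       L j = conn_comp en (set (take j es)) W a \<and> R j = conn_comp en (set (take j es)) W b"
  shows "merges_components en W es L R"
  unfolding merges_components_def
proof (intro allI impI)
  fix j assume j: "j < length es"
  with LR obtain a b where ab: "en (es ! j) = {a, b}"
    "L j = conn_comp en (set (take j es)) W a" "R j = conn_comp en (set (take j es)) W b"
    by blast
  have ej: "es ! j \<in> set es" using j by simp
  then obtain a' b' where "en (es ! j) = {a', b'}" "a' \<in> W" "b' \<in> W"
    using W unfolding edges_within_def by blast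
  then have "a \<in> W" "b \<in> W" using ab(1) by (auto simp: doubleton_eq_iff)
  have "distinct (take j es @ [es ! j])"
    using es(1) j by (metis distinct_take take_Suc_conv_app_nth)
  then have "set (take j es) \<subseteq> set es - {es ! j}" using set_take_subset by fastforce
  then have "(erel en (set (take j es)))\<^sup>* \<subseteq> (erel en (set es - {es ! j}))\<^sup>*"
    by (intro rtrancl_mono erel_mono)
  moreover have "(a, b) \<notin> (erel en (set es - {es ! j}))\<^sup>*"
    using es(2) ej ab(1) unfolding is_forest_def by blast
  ultimately have "(a, b) \<notin> (erel en (set (take j es)))\<^sup>*" by blast
  with ab \<open>a \<in> W\<close> \<open>b \<in> W\<close> show "\<exists>a b. en (es ! j) = {a, b} \<and> a \<in> W \<and> b \<in> W \<and>
      (a, b) \<notin> (erel en (set (take j es)))\<^sup>* \<and>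
      L j = conn_comp en (set (take j es)) W a \<and> R j = conn_comp en (set (take j es)) W b"
    by blast
qed

lemma merges_components_Xsel_subset:
  assumes "merges_components en W es L R" "j < length es"
  shows "Xsel L R j \<subseteq> W"
proof -
  obtain a b where "L j = conn_comp en (set (take j es)) W a" "R j = conn_comp en (set (take j es)) W b"
    using assms unfolding merges_components_def by blast
  then show ?thesis by (simp add: Xsel_def Let_def conn_comp_subset)
qed

lemma two_pow_Suc_le_card_Un:
  fixes k :: "'a \<Rightarrow> nat"
  assumes fin: "finite P" "finite Q" and disj: "P \<inter> Q = {}" and "Q \<noteq> {}"
    and P: "\<forall>A\<in>P. 2 ^ k A \<le> card P" and Q: "\<forall>B\<in>Q. 2 ^ k B \<le> card Q"
    and A: "A \<in> P" and Max: "Max (k ` P) \<le> Max (k ` Q)"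
  shows "2 ^ Suc (k A) \<le> card (P \<union> Q)"
proof -
  have "Max (k ` Q) \<in> k ` Q" using fin(2) \<open>Q \<noteq> {}\<close> by (intro Max_in) auto
  then obtain B where B: "B \<in> Q" "k B = Max (k ` Q)" by auto
  have "k A \<le> Max (k ` P)" using fin(1) A by simp
  then have "k A \<le> k B" using Max B(2) by linarith
  then have "(2::nat) ^ k A \<le> 2 ^ k B" by (simp add: power_increasing)
  moreover have "2 ^ k A \<le> card P" "2 ^ k B \<le> card Q" using P Q A B(1) by auto
  ultimately have "2 ^ Suc (k A) \<le> card P + card Q" by (simp only: power_Suc)
  also have "\<dots> = card (P \<union> Q)" using card_Un_disjoint[OF fin disj] by simp
  finally show ?thesis .
qed

lemma two_pow_Suc_le_card_Un_selected:
  fixes k :: "'a \<Rightarrow> nat"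
  assumes fin: "finite P" "finite Q" and disj: "P \<inter> Q = {}" and ne: "P \<noteq> {}" "Q \<noteq> {}"
    and P: "\<forall>A\<in>P. 2 ^ k A \<le> card P" and Q: "\<forall>B\<in>Q. 2 ^ k B \<le> card Q"
    and A: "A \<in> (if Max (k ` P) \<le> Max (k ` Q) then P else Q)"
  shows "2 ^ Suc (k A) \<le> card (P \<union> Q)"
proof (cases "Max (k ` P) \<le> Max (k ` Q)")
  case True
  then show ?thesis using two_pow_Suc_le_card_Un[OF fin disj ne(2) P Q] A by simp
next
  case False
  have "Q \<inter> P = {}" using disj by blast
  with False have "2 ^ Suc (k A) \<le> card (Q \<union> P)"
    using two_pow_Suc_le_card_Un[OF fin(2,1) _ ne(1) Q P] A by simp
  then show ?thesis by (simp add: Un_commute)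
qed

lemma two_pow_le_card_conn_comp_insert:
  fixes k :: "'a \<Rightarrow> nat"
  assumes W: "finite W" and e: "en e = {a, b}" and a: "a \<in> W" and b: "b \<in> W"
    and ab: "(a, b) \<notin> (erel en S)\<^sup>*"
    and inv: "\<forall>A\<in>W. 2 ^ k A \<le> card (conn_comp en S W A)"
    and X: "X = (if Max (k ` conn_comp en S W a) \<le> Max (k ` conn_comp en S W b)
                 then conn_comp en S W a else conn_comp en S W b)"
    and A: "A \<in> W"
  shows "2 ^ (k A + (if A \<in> X then 1 else 0)) \<le> card (conn_comp en (insert e S) W A)"
proof -
  let ?C = "conn_comp en S W"
  have fin: "finite (?C c)" for c using finite_subset[OF conn_comp_subset W] .
  have nonempty: "?C c \<noteq> {}" if "c \<in> W" for c using conn_comp_self[OF that, of en S] by blast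
  have comp: "\<forall>A'\<in>?C c. 2 ^ k A' \<le> card (?C c)" for c
  proof
    fix A' assume A': "A' \<in> ?C c"
    then have "A' \<in> W" using conn_comp_subset[of en S W c] by blast
    then have "2 ^ k A' \<le> card (?C A')" using inv by blast
    then show "2 ^ k A' \<le> card (?C c)" using conn_comp_eq[OF A'] by simp
  qed
  have disj: "?C a \<inter> ?C b = {}" by (rule conn_comp_disjoint[OF b ab])
  have merged: "2 ^ Suc (k A) \<le> card (?C a \<union> ?C b)" if "A \<in> X"
    using two_pow_Suc_le_card_Un_selected[OF fin fin disj nonempty[OF a] nonempty[OF b] comp comp]
      that X by simp
  show ?thesis
  proof (cases "A \<in> ?C a \<union> ?C b")
    case False
    then have "A \<notin> X" unfolding X by simp
    then show ?thesis using False inv A conn_comp_insert[of en e a b, OF e A] by simp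
  next
    case True
    then have new: "conn_comp en (insert e S) W A = ?C a \<union> ?C b"
      using conn_comp_insert[of en e a b, OF e A] by simp
    show ?thesis
    proof (cases "A \<in> X")
      case True
      then show ?thesis using new merged by simp
    next
      case False
      have "?C A = ?C a \<or> ?C A = ?C b"
        using True conn_comp_eq[of A en S W a] conn_comp_eq[of A en S W b] by auto
      then have "card (?C A) \<le> card (?C a \<union> ?C b)" using fin by (auto intro: card_mono)
      moreover have "2 ^ k A \<le> card (?C A)" using inv A by blast
      ultimately show ?thesis using False new by simp
    qed
  qed
qed

lemma two_pow_ctr_le_card_conn_comp:
  assumes W: "finite W" and merges: "merges_components en W es L R"
    and "j \<le> length es" "A \<in> W"
  shows "2 ^ ctr L R j A \<le> card (conn_comp en (set (take j es)) W A)"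
  using assms(3,4)
proof (induct j arbitrary: A)
  case 0
  have "conn_comp en {} W A \<noteq> {}" using conn_comp_self[OF 0(2), of en "{}"] by blast
  then show ?case using finite_subset[OF conn_comp_subset W] by (simp add: Suc_le_eq card_gt_0_iff)
next
  case (Suc j)
  then have j: "j < length es" by simp
  with merges obtain a b where ab: "en (es ! j) = {a, b}" "a \<in> W" "b \<in> W"
    "(a, b) \<notin> (erel en (set (take j es)))\<^sup>*"
    "L j = conn_comp en (set (take j es)) W a" "R j = conn_comp en (set (take j es)) W b"
    unfolding merges_components_def by blast
  have X: "Xsel L R j = (if Max (ctr L R j ` conn_comp en (set (take j es)) W a)
                            \<le> Max (ctr L R j ` conn_comp en (set (take j es)) W b)
                          then conn_comp en (set (take j es)) W a
                          else conn_comp en (set (take j es)) W b)"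
    using ab(5,6) by (simp add: Xsel_def Let_def)
  have IH: "\<forall>A\<in>W. 2 ^ ctr L R j A \<le> card (conn_comp en (set (take j es)) W A)"
    using Suc j by simp
  have "set (take (Suc j) es) = insert (es ! j) (set (take j es))"
    using j by (simp add: take_Suc_conv_app_nth)
  then show ?case
    using two_pow_le_card_conn_comp_insert[OF W ab(1-4) IH X Suc(3)]
    by (simp only: ctr_Suc_Xsel)
qed

lemma ctr_le_log_card:
  assumes "finite W" "merges_components en W es L R" "j \<le> length es" "A \<in> W"
  shows "real (ctr L R j A) \<le> log 2 (card W)"
proof -
  have "2 ^ ctr L R j A \<le> card (conn_comp en (set (take j es)) W A)"
    by (rule two_pow_ctr_le_card_conn_comp[OF assms])
  also have "\<dots> \<le> card W" using assms(1) conn_comp_subset by (rule card_mono)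
  finally show ?thesis by (rule le_log2_of_power)
qed

section \<open>Cuts crossed by an edge\<close>

lemma conn_comp_mem_if_mem_Union:
  assumes "X \<subseteq> components V en S" "x \<in> \<Union> X"
  shows "conn_comp en S V x \<in> X"
proof -
  obtain B where B: "B \<in> X" "x \<in> B" using assms(2) by blast
  then obtain v where "B = conn_comp en S V v" using assms(1) unfolding components_def by blast
  then show ?thesis using B conn_comp_eq[of x en S V v] by simp
qed

lemma card_complete_cuts_le_ctr:
  assumes X: "\<forall>j < m. Xsel L R j \<subseteq> components V en S" and e: "en e = {u, v}"
  shows "card {j. j < m \<and> e \<in> complete_cut en Es (\<Union> (Xsel L R j))}
    \<le> ctr L R m (conn_comp en S V u) + ctr L R m (conn_comp en S V v)"
proof -
  let ?Au = "conn_comp en S V u" and ?Av = "conn_comp en S V v"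
  have "{j. j < m \<and> e \<in> complete_cut en Es (\<Union> (Xsel L R j))}
      \<subseteq> {j. j < m \<and> ?Au \<in> Xsel L R j} \<union> {j. j < m \<and> ?Av \<in> Xsel L R j}"
  proof
    fix j assume "j \<in> {j. j < m \<and> e \<in> complete_cut en Es (\<Union> (Xsel L R j))}"
    then have j: "j < m" and "en e \<inter> \<Union> (Xsel L R j) \<noteq> {}"
      unfolding complete_cut_def by auto
    then have "u \<in> \<Union> (Xsel L R j) \<or> v \<in> \<Union> (Xsel L R j)" using e by auto
    then show "j \<in> {j. j < m \<and> ?Au \<in> Xsel L R j} \<union> {j. j < m \<and> ?Av \<in> Xsel L R j}"
      using conn_comp_mem_if_mem_Union[OF X[rule_format, OF j]] j by blast
  qed
  then have "card {j. j < m \<and> e \<in> complete_cut en Es (\<Union> (Xsel L R j))}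
      \<le> card ({j. j < m \<and> ?Au \<in> Xsel L R j} \<union> {j. j < m \<and> ?Av \<in> Xsel L R j})"
    by (rule card_mono[rotated]) simp
  also have "\<dots> \<le> ctr L R m ?Au + ctr L R m ?Av"
    unfolding ctr_eq_card_Xsel by (rule card_Un_le)
  finally show ?thesis .
qed

lemma card_complete_cuts_le_two_log:
  assumes V: "finite V" and Es: "edges_within V en Es"
    and merges: "merges_components en' (components V en S) es L R" and m: "m \<le> length es"
    and e: "e \<in> Es"
  shows "real (card {j. j < m \<and> e \<in> complete_cut en Es (\<Union> (Xsel L R j))})
    \<le> 2 * log 2 (card (components V en S))"
proof -
  obtain u v where uv: "en e = {u, v}" "u \<in> V" "v \<in> V"
    using Es e unfolding edges_within_def by blast
  have fin: "finite (components V en S)" using V by (simp add: components_def)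
  have "\<forall>j < m. Xsel L R j \<subseteq> components V en S"
    using merges_components_Xsel_subset[OF merges] m by simp
  from card_complete_cuts_le_ctr[OF this uv(1), of Es]
    ctr_le_log_card[OF fin merges m conn_comp_in_components[OF uv(2)]]
    ctr_le_log_card[OF fin merges m conn_comp_in_components[OF uv(3)]]
  show ?thesis by linarith
qed

lemma card_partial_cuts_le_card_complete_cuts:
  fixes m :: nat
  shows "card {j. j < m \<and> e \<in> partial_cut en w Es (X j) (W j)}
    \<le> card {j. j < m \<and> e \<in> complete_cut en Es (X j)}"
  by (rule card_mono) (auto simp: partial_cut_def)

theorem mainTheorem9:
  fixes V :: "'v set" and E :: "'e set" and ends :: "'e \<Rightarrow> 'v set"
    and w c :: "'e \<Rightarrow> real" and F T Tcc :: "'e set" and es :: "'e list"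
    and L R :: "nat \<Rightarrow> 'v set set"
  assumes finV: "finite V" and finE: "finite E"
    and edges: "\<forall>e\<in>E. ends e \<subseteq> V \<and> card (ends e) = 2"
    and connG: "connected_via V ends E"
    and w_nonneg: "\<forall>e\<in>E. 0 \<le> w e" and c_pos: "\<forall>e\<in>E. 0 < c e"
    and F_sub: "F \<subseteq> E" and connG': "connected_via V ends (E - F)"
    and T_mst: "is_mst V ends w E T"
    and t_ge2: "T \<inter> F \<noteq> {}"
    and Tcc_mst: "is_mst (components V ends (T - F)) (cc_ends V ends (T - F)) w (E - F) Tcc"
    and es_distinct: "distinct es" and es_set: "set es = Tcc"
    and es_sorted: "sorted (map w es)"
    and LR: "\<forall>j < length es. \<exists>a b.
               cc_ends V ends (T - F) (es ! j) = {a, b} \<and>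
               L j = conn_comp (cc_ends V ends (T - F)) (set (take j es)) (components V ends (T - F)) a \<and>
               R j = conn_comp (cc_ends V ends (T - F)) (set (take j es)) (components V ends (T - F)) b"
  shows "(\<forall>A \<in> components V ends (T - F).
            real (ctr L R (card (T \<inter> F)) A) \<le> log 2 (real (card (T \<inter> F) + 1)))
       \<and> (\<forall>e\<in>E. real (card {j. j < card (T \<inter> F) \<and>
                    e \<in> complete_cut ends E (\<Union> (Xsel L R j))})
                 \<le> 2 * log 2 (real (card (T \<inter> F) + 1)))
       \<and> (\<forall>e\<in>E. real (card {j. j < card (T \<inter> F) \<and>
                    e \<in> partial_cut ends w E (\<Union> (Xsel L R j)) (w (es ! j))})
                 \<le> 2 * log 2 (real (card (T \<inter> F) + 1)))"
proof -
  let ?Vcc = "components V ends (T - F)" and ?en = "cc_ends V ends (T - F)"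
  have T: "spanning_tree V ends E T" and Tcc: "spanning_tree ?Vcc ?en (E - F) (set es)"
    using T_mst Tcc_mst es_set by (simp_all add: is_mst_def)
  have E: "edges_within V ends E" using edges by (rule edges_withinI_card_2)
  have sub: "T \<subseteq> E" "set es \<subseteq> E" using T Tcc by (auto simp: spanning_tree_def)
  obtain e0 where "e0 \<in> T \<inter> F" using t_ge2 by blast
  then obtain u where "u \<in> V" using E sub(1) unfolding edges_within_def by blast
  then have "V \<noteq> {}" by blast
  then have fin_Vcc: "finite ?Vcc" and "?Vcc \<noteq> {}" using finV by (simp_all add: components_def)
  have card_Vcc: "card ?Vcc = card (T \<inter> F) + 1"
    using card_components_Diff_spanning_tree[OF T _ edges_within_mono[OF E sub(1)] finV \<open>V \<noteq> {}\<close>]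
      finite_subset[OF sub(1) finE] by simp
  have Ecc: "edges_within ?Vcc ?en (set es)"
    using edges_within_cc_ends[OF edges_within_mono[OF E sub(2)]] .
  have m_le: "card (T \<inter> F) \<le> length es"
    using card_le_Suc_length_spanning_tree[OF Tcc es_distinct Ecc fin_Vcc \<open>?Vcc \<noteq> {}\<close>] card_Vcc
    by simp
  have merges: "merges_components ?en ?Vcc es L R"
    using Tcc by (intro merges_components_if_forest[OF es_distinct _ Ecc LR]) (simp add: spanning_tree_def)
  have cuts: "real (card {j. j < card (T \<inter> F) \<and> e \<in> complete_cut ends E (\<Union> (Xsel L R j))})
      \<le> 2 * log 2 (real (card (T \<inter> F) + 1))" if "e \<in> E" for e
    using card_complete_cuts_le_two_log[OF finV E merges m_le that] card_Vcc by simp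
  moreover have "real (card {j. j < card (T \<inter> F) \<and>
                    e \<in> partial_cut ends w E (\<Union> (Xsel L R j)) (w (es ! j))})
      \<le> 2 * log 2 (real (card (T \<inter> F) + 1))" if "e \<in> E" for e
    using cuts[OF that] card_partial_cuts_le_card_complete_cuts[of "card (T \<inter> F)" e ends w E]
    by (meson order_trans of_nat_mono)
  ultimately show ?thesis
    using ctr_le_log_card[OF fin_Vcc merges m_le] card_Vcc by simp
qed

end
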